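(* Let $H=\langle a,b,c\mid ac=ca,\ bc=cb,\ [a,b]=c\rangle$ be the integral Heisenberg group, identified with the group of matrices $\begin{bmatrix}1&x&z\\ &1&y\\ &&1\end{bmatrix}$ with $x,y,z\in\mathbb{Z}$, and let $S=\{a,b,a^{-1},b^{-1}\}$ be the generating set. For any $g=\begin{bmatrix}1&x&z\\ &1&y\\ &&1\end{bmatrix}\in H$, the stable word length with respect to $S$ is \[ \mathrm{swl}_S(g)=\lim_{n\to\infty}\frac{|g^n|_S}{n}=|x|+|y|. \]
   Context: Here $|g|_S$ denotes the word length of $g$ with respect to $S$. The proof uses Blachère's formula for word lengths in the Heisenberg group: writing $d(x,y,z)$ for the word length of the matrix with entries $x,y,z$, one has $d(x,y,z)=d(-x,y,-z)=d(x,-y,-z)=d(-x,-y,z)=d(y,x,z)$, and for $z\ge 0$, $x\ge 0$, $x\ge y\ge -x$: if $y\ge 0$, $x\le\sqrt z$ then $d(x,y,z)=2\lceil 2\sqrt z\rceil-x-y$; if $y\ge 0$, $x\ge\sqrt z$ and $xy>z$ then $d(x,y,z)=x+y$. *)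

theory Defs
  imports Complex_Main
begin

text \<open>The integral Heisenberg group: the triple (x, y, z) of integers stands for the
upper unitriangular matrix [[1,x,z],[0,1,y],[0,0,1]]. The product below is exactly
matrix multiplication:
[[1,x,z],[0,1,y],[0,0,1]] * [[1,x',z'],[0,1,y'],[0,0,1]] = [[1,x+x',z+z'+x*y'],[0,1,y+y'],[0,0,1]].\<close>

type_synonym heis = "int \<times> int \<times> int"

definition hmul :: "heis \<Rightarrow> heis \<Rightarrow> heis" where
  "hmul g h = (case g of (x, y, z) \<Rightarrow> case h of (x', y', z') \<Rightarrow>
      (x + x', y + y', z + z' + x * y'))"

definition hone :: heis where "hone = (0, 0, 0)"

definition hinv :: "heis \<Rightarrow> heis" where
  "hinv g = (case g of (x, y, z) \<Rightarrow> (- x, - y, x * y - z))"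

definition gen_a :: heis where "gen_a = (1, 0, 0)"
definition gen_b :: heis where "gen_b = (0, 1, 0)"

definition genS :: "heis set" where
  "genS = {gen_a, gen_b, hinv gen_a, hinv gen_b}"

fun hprod :: "heis list \<Rightarrow> heis" where
  "hprod [] = hone"
| "hprod (s # w) = hmul s (hprod w)"

fun hpow :: "heis \<Rightarrow> nat \<Rightarrow> heis" where
  "hpow g 0 = hone"
| "hpow g (Suc n) = hmul g (hpow g n)"

definition word_length :: "heis \<Rightarrow> nat" where
  "word_length g = (LEAST n. \<exists>w. length w = n \<and> set w \<subseteq> genS \<and> hprod w = g)"

end

theory Submission
  imports Defs "HOL-Library.Discrete_Functions"
begin

(* Projecting (x, y, z) to the abelianization (x, y) changes |x| + |y| by at most one per
   generator, so |g^n|_S >= n (|x| + |y|). Conversely g^n = (x, y, xy)^n (0, 0, n (z - xy)),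
   where (x, y, xy) = a^x b^y has length at most |x| + |y|, while a central element (0, 0, c)
   has length O(sqrt |c|): with |c| = k^2 + r and r <= 2k it is the commutator [a^(+-k), b^k]
   followed by r commutators [a^(+-1), b]. Hence |g^n|_S = n (|x| + |y|) + O(sqrt n). *)

lemma hmul_triple: "hmul (x, y, z) (x', y', z') = (x + x', y + y', z + z' + x * y')"
  by (simp add: hmul_def)

lemma hmul_assoc: "hmul (hmul g h) k = hmul g (hmul h k)"
  by (cases g; cases h; cases k) (simp add: hmul_def algebra_simps)

lemma hmul_hone_left: "hmul hone g = g"
  by (cases g) (simp add: hmul_def hone_def)

lemma hprod_append: "hprod (v @ w) = hmul (hprod v) (hprod w)"
  by (induction v) (simp_all add: hmul_hone_left hmul_assoc)

lemma hpow_central: "hpow (0, 0, c) n = (0, 0, int n * c)"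
  by (induction n) (simp_all add: hmul_triple hone_def algebra_simps)

lemma hpow_abelian_part: "\<exists>c. hpow (x, y, z) n = (int n * x, int n * y, c)"
  by (induction n) (auto simp: hone_def hmul_triple algebra_simps)

lemma hpow_eq_hmul_central:
  "hpow (x, y, z) n = hmul (hpow (x, y, x * y) n) (0, 0, int n * (z - x * y))"
  by (induction n) (auto simp: hone_def hmul_def split: prod.split simp add: algebra_simps)

lemma commutator_eq_central:
  "hmul (hmul (hmul (p, 0, 0) (0, q, 0)) (- p, 0, 0)) (0, - q, 0) = (0, 0, p * q)"
  by (simp add: hmul_triple)

definition spells :: "heis list \<Rightarrow> heis \<Rightarrow> bool" where
  "spells w g \<longleftrightarrow> set w \<subseteq> genS \<and> hprod w = g"

lemma spells_append: "spells v g \<Longrightarrow> spells w h \<Longrightarrow> spells (v @ w) (hmul g h)"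
  by (simp add: spells_def hprod_append)

lemma spells_replicate: "s \<in> genS \<Longrightarrow> spells (replicate n s) (hpow s n)"
  by (induction n) (auto simp: spells_def)

lemma spells_gen_a_power: "\<exists>w. spells w (k, 0, 0) \<and> length w = nat \<bar>k\<bar>"
proof -
  let ?s = "if k \<ge> 0 then gen_a else hinv gen_a"
  have "hpow ?s n = (if k \<ge> 0 then int n else - int n, 0, 0)" for n
    by (induction n) (simp_all add: gen_a_def hinv_def hone_def hmul_triple)
  then have "hpow ?s (nat \<bar>k\<bar>) = (k, 0, 0)"
    by simp
  moreover have "?s \<in> genS"
    by (simp add: genS_def)
  ultimately show ?thesis
    using spells_replicate[of ?s "nat \<bar>k\<bar>"] by auto
qed

lemma spells_gen_b_power: "\<exists>w. spells w (0, k, 0) \<and> length w = nat \<bar>k\<bar>"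
proof -
  let ?s = "if k \<ge> 0 then gen_b else hinv gen_b"
  have "hpow ?s n = (0, if k \<ge> 0 then int n else - int n, 0)" for n
    by (induction n) (simp_all add: gen_b_def hinv_def hone_def hmul_triple)
  then have "hpow ?s (nat \<bar>k\<bar>) = (0, k, 0)"
    by simp
  moreover have "?s \<in> genS"
    by (simp add: genS_def)
  ultimately show ?thesis
    using spells_replicate[of ?s "nat \<bar>k\<bar>"] by auto
qed

lemma ex_spells: "\<exists>w. spells w g"
proof -
  obtain x y z where g: "g = (x, y, z)"
    by (cases g) auto
  have spelled_hmul: "\<exists>w. spells w (hmul g h)" if "\<exists>v. spells v g" "\<exists>w. spells w h" for g h
    using that spells_append by blast
  have spelled_a: "\<exists>w. spells w (k, 0, 0)" and spelled_b: "\<exists>w. spells w (0, k, 0)" for k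
    using spells_gen_a_power spells_gen_b_power by blast+
  have "\<exists>w. spells w (0, 0, c)" for c
    by (metis commutator_eq_central mult_1_right spelled_a spelled_b spelled_hmul)
  moreover have "g = hmul (hmul (x, 0, 0) (0, y, 0)) (0, 0, z - x * y)"
    by (simp add: g hmul_triple)
  ultimately show ?thesis
    using spelled_hmul spelled_a spelled_b by metis
qed

lemma word_length_le: "spells w g \<Longrightarrow> word_length g \<le> length w"
  unfolding word_length_def spells_def by (rule Least_le) blast

lemma spells_word_length: obtains w where "spells w g" "length w = word_length g"
proof -
  have "\<exists>n w. length w = n \<and> spells w g"
    using ex_spells by blast
  then have "\<exists>w. length w = word_length g \<and> spells w g"
    unfolding word_length_def spells_def by (rule LeastI_ex)
  then show thesis
    using that by blast
qed

lemma word_length_hmul_le: "word_length (hmul g h) \<le> word_length g + word_length h"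
proof -
  obtain v w where "spells v g" "length v = word_length g" "spells w h" "length w = word_length h"
    by (metis spells_word_length)
  then show ?thesis
    using word_length_le[OF spells_append] by fastforce
qed

lemma word_length_hpow_le: "word_length (hpow g n) \<le> n * word_length g"
proof (induction n)
  case 0
  have "spells [] hone"
    by (simp add: spells_def)
  then show ?case
    using word_length_le by fastforce
next
  case (Suc n)
  then show ?case
    using word_length_hmul_le[of g "hpow g n"] by simp
qed

lemma word_length_gen_power: "word_length (k, 0, 0) \<le> nat \<bar>k\<bar>" "word_length (0, k, 0) \<le> nat \<bar>k\<bar>"
  using spells_gen_a_power spells_gen_b_power word_length_le by metis+

lemma word_length_central_product: "word_length (0, 0, p * q) \<le> 2 * nat \<bar>p\<bar> + 2 * nat \<bar>q\<bar>"
proof -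
  obtain w1 w2 w3 w4 where "spells w1 (p, 0, 0)" "spells w2 (0, q, 0)" "spells w3 (- p, 0, 0)" "spells w4 (0, - q, 0)"
    and lengths: "length w1 = nat \<bar>p\<bar>" "length w2 = nat \<bar>q\<bar>" "length w3 = nat \<bar>p\<bar>" "length w4 = nat \<bar>q\<bar>"
    using spells_gen_a_power spells_gen_b_power by (metis abs_minus_cancel)
  then have "spells (((w1 @ w2) @ w3) @ w4) (0, 0, p * q)"
    using spells_append commutator_eq_central by metis
  then show ?thesis
    using word_length_le lengths by fastforce
qed

lemma word_length_central_le_sqrt: "real (word_length (0, 0, c)) \<le> 12 * sqrt \<bar>c\<bar>"
proof -
  define k where "k = floor_sqrt (nat \<bar>c\<bar>)"
  define r where "r = nat \<bar>c\<bar> - k * k"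
  have "k * k \<le> nat \<bar>c\<bar>" "nat \<bar>c\<bar> < Suc k * Suc k"
    unfolding k_def using floor_sqrt_power2_le Suc_floor_sqrt_power2_gt by (simp_all add: power2_eq_square)
  then have "nat \<bar>c\<bar> = k * k + r" and "r \<le> 2 * k"
    unfolding r_def by auto
  then have abs_c: "\<bar>c\<bar> = int k * int k + int r"
    by (simp flip: of_nat_mult of_nat_add)
  then have "real k ^ 2 \<le> \<bar>real_of_int c\<bar>"
    by (simp add: power2_eq_square flip: of_int_abs)
  then have "real k \<le> sqrt \<bar>c\<bar>"
    by (simp add: real_le_rsqrt)
  obtain s where s: "\<bar>s\<bar> = 1" "c = s * (int k * int k + int r)"
    using that[of 1] that[of "- 1"] abs_c by (cases "c \<ge> 0") auto
  have "(0, 0, c) = hmul (0, 0, (s * int k) * int k) (hpow (0, 0, s * 1) r)"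
    using s(2) by (simp add: hpow_central hmul_triple algebra_simps)
  then have "word_length (0, 0, c) \<le> word_length (0, 0, (s * int k) * int k) + word_length (hpow (0, 0, s * 1) r)"
    by (simp add: word_length_hmul_le)
  also have "\<dots> \<le> word_length (0, 0, (s * int k) * int k) + r * word_length (0, 0, s * 1)"
    by (simp add: word_length_hpow_le)
  also have "\<dots> \<le> 4 * k + r * 4"
    using word_length_central_product[of "s * int k" "int k"] word_length_central_product[of s 1] s(1)
    by (intro add_mono mult_left_mono) (simp_all add: abs_mult)
  finally show ?thesis
    using \<open>r \<le> 2 * k\<close> \<open>real k \<le> sqrt \<bar>c\<bar>\<close> by linarith
qed

lemma abelian_norm_le_length:
  "spells w g \<Longrightarrow> \<bar>fst g\<bar> + \<bar>fst (snd g)\<bar> \<le> int (length w)"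
proof (induction w arbitrary: g)
  case Nil
  then show ?case
    by (auto simp: spells_def hone_def)
next
  case (Cons s w)
  then have "s \<in> genS" "g = hmul s (hprod w)"
    and "\<bar>fst (hprod w)\<bar> + \<bar>fst (snd (hprod w))\<bar> \<le> int (length w)"
    by (simp_all add: spells_def)
  then show ?case
    by (cases "hprod w") (auto simp: genS_def gen_a_def gen_b_def hinv_def hmul_triple)
qed

lemma abelian_norm_le_word_length: "\<bar>x\<bar> + \<bar>y\<bar> \<le> int (word_length (x, y, z))"
  by (metis abelian_norm_le_length fst_conv snd_conv spells_word_length)

lemma word_length_hpow_ge:
  "real_of_int (\<bar>x\<bar> + \<bar>y\<bar>) * real n \<le> real (word_length (hpow (x, y, z) n))"
proof -
  obtain c where "hpow (x, y, z) n = (int n * x, int n * y, c)"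
    using hpow_abelian_part by blast
  then have "int n * (\<bar>x\<bar> + \<bar>y\<bar>) \<le> int (word_length (hpow (x, y, z) n))"
    using abelian_norm_le_word_length[of "int n * x" "int n * y" c] by (simp add: abs_mult distrib_left)
  then have "real_of_int (int n * (\<bar>x\<bar> + \<bar>y\<bar>)) \<le> real (word_length (hpow (x, y, z) n))"
    by (metis of_int_le_iff of_int_of_nat_eq)
  then show ?thesis
    by (simp add: mult.commute)
qed

lemma word_length_hpow_le_sqrt:
  "real (word_length (hpow (x, y, z) n))
     \<le> real_of_int (\<bar>x\<bar> + \<bar>y\<bar>) * real n + 12 * sqrt \<bar>z - x * y\<bar> * sqrt (real n)"
proof -
  have "word_length (hpow (x, y, z) n) \<le> word_length (hpow (x, y, x * y) n) + word_length (0, 0, int n * (z - x * y))"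
    unfolding hpow_eq_hmul_central[of x y z] by (rule word_length_hmul_le)
  also have "\<dots> \<le> n * (nat \<bar>x\<bar> + nat \<bar>y\<bar>) + word_length (0, 0, int n * (z - x * y))"
  proof -
    have "word_length (x, y, x * y) \<le> nat \<bar>x\<bar> + nat \<bar>y\<bar>"
      using word_length_hmul_le[of "(x, 0, 0)" "(0, y, 0)"] word_length_gen_power[of x] word_length_gen_power[of y]
      by (simp add: hmul_triple)
    then have "n * word_length (x, y, x * y) \<le> n * (nat \<bar>x\<bar> + nat \<bar>y\<bar>)"
      by (rule mult_le_mono2)
    then show ?thesis
      using word_length_hpow_le[of "(x, y, x * y)" n] by linarith
  qed
  finally have "real (word_length (hpow (x, y, z) n))
      \<le> real (n * (nat \<bar>x\<bar> + nat \<bar>y\<bar>)) + real (word_length (0, 0, int n * (z - x * y)))"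
    by linarith
  moreover have "real (n * (nat \<bar>x\<bar> + nat \<bar>y\<bar>)) = real_of_int (\<bar>x\<bar> + \<bar>y\<bar>) * real n"
    by simp
  moreover have "sqrt (real_of_int \<bar>int n * (z - x * y)\<bar>) = sqrt \<bar>z - x * y\<bar> * sqrt (real n)"
    by (simp add: abs_mult real_sqrt_mult)
  ultimately show ?thesis
    using word_length_central_le_sqrt[of "int n * (z - x * y)"] by linarith
qed

lemma LIMSEQ_divide_of_sqrt_bounds:
  fixes f :: "nat \<Rightarrow> real"
  assumes "\<And>n. a * real n \<le> f n" and "\<And>n. f n \<le> a * real n + C * sqrt (real n)"
  shows "(\<lambda>n. f n / real n) \<longlonglongrightarrow> a"
proof (rule tendsto_sandwich[where f = "\<lambda>_. a" and h = "\<lambda>n. a + C / sqrt (real n)"])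
  have "(\<lambda>n. C / sqrt (real n)) \<longlonglongrightarrow> 0"
    by (intro tendsto_divide_0[OF tendsto_const] filterlim_at_top_imp_at_infinity
        filterlim_compose[OF sqrt_at_top filterlim_real_sequentially])
  then show "(\<lambda>n. a + C / sqrt (real n)) \<longlonglongrightarrow> a"
    using tendsto_add[OF tendsto_const, of _ 0 sequentially a] by simp
  show "\<forall>\<^sub>F n in sequentially. a \<le> f n / real n"
    using eventually_gt_at_top[of 0] by eventually_elim (use assms(1) in \<open>simp add: field_simps\<close>)
  show "\<forall>\<^sub>F n in sequentially. f n / real n \<le> a + C / sqrt (real n)"
    using eventually_gt_at_top[of 0]
  proof eventually_elim
    case (elim n)
    have "f n / real n \<le> (a * real n + C * sqrt (real n)) / real n"
      using assms(2) elim by (simp add: divide_right_mono)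
    also have "\<dots> = a + C / sqrt (real n)"
      using elim by (simp add: field_simps flip: real_sqrt_mult)
    finally show ?case .
  qed
qed simp

theorem corollary23:
  fixes x y z :: int
  shows "(\<lambda>n. real (word_length (hpow (x, y, z) n)) / real n)
           \<longlonglongrightarrow> real_of_int (\<bar>x\<bar> + \<bar>y\<bar>)"
  by (rule LIMSEQ_divide_of_sqrt_bounds[OF word_length_hpow_ge word_length_hpow_le_sqrt])

end
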